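(* Let $\sigma\subseteq \overline{M}_{\mathbb R}$ be a reflexive Gorenstein cone of index $r$, and let $\overline N^{(r)}:=\overline N+\frac1r\mathbb Z\, n_\sigma\subseteq \overline N_{\mathbb R}$. Let $\rho$ be a facet of the dual cone $\sigma^\vee$ and let $\mathrm{lin}(\rho)$ be its linear span. Then \[\mathrm{lin}(\rho)\cap \overline N=\mathrm{lin}(\rho)\cap \overline N^{(r)}.\] In particular $\partial\sigma^\vee\cap\overline N=\partial\sigma^\vee\cap \overline N^{(r)}$.
   Context: $\overline M\cong\mathbb Z^{\bar d}$ and $\overline N=\mathrm{Hom}(\overline M,\mathbb Z)$ are dual lattices with pairing $\langle\cdot,\cdot\rangle$, $\overline M_{\mathbb R}=\overline M\otimes\mathbb R$, $\overline N_{\mathbb R}=\overline N\otimes\mathbb R$. For a full-dimensional rational polyhedral cone $\sigma\subseteq\overline M_{\mathbb R}$, its dual cone is $\sigma^\vee=\{y\in\overline N_{\mathbb R}:\langle x,y\rangle\ge0\ \forall x\in\sigma\}$. Such a cone $\sigma$ is a Gorenstein cone if it is generated by finitely many lattice points all lying in an affine hyperplane $\{x:\langle x,n\rangle=1\}$ for some $n\in\overline N$; this $n$ is unique and is denoted $n_\sigma$. The support of $\sigma$ is $\sigma\cap\{x:\langle x,n_\sigma\rangle=1\}$, a lattice polytope with respect to the affine lattice $\overline M\cap\{\langle x,n_\sigma\rangle=1\}$. $\sigma$ is a reflexive Gorenstein cone if $\sigma^\vee$ is also a Gorenstein cone; then $m_{\sigma^\vee}\in\overline M$ denotes the point with $\langle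 m_{\sigma^\vee},y\rangle=1$ for all lattice generators $y$ of $\sigma^\vee$, and the index of $\sigma$ is $r=\langle m_{\sigma^\vee},n_\sigma\rangle$. *)

theory Defs
  imports "HOL-Analysis.Analysis"
begin

text \<open>Both lattices M-bar and N-bar are identified with the integer points of
  real^'n (dual bases), the pairing being the standard inner product.\<close>

definition lattice_pts :: "(real^'n) set" where
  "lattice_pts = {x. \<forall>i. x $ i \<in> \<int>}"

definition cone_gen :: "(real^'n) set \<Rightarrow> (real^'n) set" where
  "cone_gen G = {\<Sum>g\<in>G. c g *\<^sub>R g | c. \<forall>g\<in>G. 0 \<le> c g}"

definition dual_cone :: "(real^'n) set \<Rightarrow> (real^'n) set" where
  "dual_cone S = {y. \<forall>x\<in>S. 0 \<le> x \<bullet> y}"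

text \<open>sigma is a (full-dimensional) Gorenstein cone and n is its distinguished
  lattice point n_sigma (which is then unique).\<close>
definition gorenstein_wrt :: "(real^'n) set \<Rightarrow> real^'n \<Rightarrow> bool" where
  "gorenstein_wrt \<sigma> n \<longleftrightarrow> n \<in> lattice_pts \<and> interior \<sigma> \<noteq> {} \<and>
     (\<exists>G. finite G \<and> G \<subseteq> lattice_pts \<and> (\<forall>g\<in>G. g \<bullet> n = 1) \<and> \<sigma> = cone_gen G)"

definition lattice_r :: "real \<Rightarrow> real^'n \<Rightarrow> (real^'n) set" where
  "lattice_r r n = {y + (of_int k / r) *\<^sub>R n | y k. y \<in> lattice_pts}"

end

theory Submission
  imports Defs
begin

text \<open>Write \<open>\<sigma> = cone_gen G\<close> with \<open>g \<bullet> n = 1\<close> for all \<open>g \<in> G\<close>. The dual cone is the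
  intersection of the half-spaces \<open>g \<bullet> y \<ge> 0\<close>, so every point of its boundary, and hence
  the linear span of every proper face, lies in a hyperplane \<open>g \<bullet> y = 0\<close> with \<open>g \<in> G\<close>.
  A point \<open>y + (k/r) n\<close> of \<open>lattice_r r n\<close> on that hyperplane has
  \<open>k/r = - g \<bullet> y \<in> \<int>\<close>, so it already lies in \<open>N\<close>. Neither the dual Gorenstein
  condition nor the value of \<open>r\<close> is needed.\<close>

lemma cone_gen_superset:
  assumes "finite G"
  shows "G \<subseteq> cone_gen G"
proof
  fix g assume "g \<in> G"
  have "(\<Sum>h\<in>G. (if h = g then 1 else 0) *\<^sub>R h) = (\<Sum>h\<in>G. if h = g then h else 0)"
    by (rule sum.cong) auto
  also have "\<dots> = g"
    using assms \<open>g \<in> G\<close> by (simp add: sum.delta)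
  finally show "g \<in> cone_gen G"
    unfolding cone_gen_def by (intro CollectI exI[of _ "\<lambda>h. if h = g then 1 else 0"]) auto
qed

lemma dual_cone_cone_gen:
  assumes "finite G"
  shows "dual_cone (cone_gen G) = (\<Inter>g\<in>G. {y. 0 \<le> g \<bullet> y})"
proof
  show "dual_cone (cone_gen G) \<subseteq> (\<Inter>g\<in>G. {y. 0 \<le> g \<bullet> y})"
    using cone_gen_superset[OF assms] by (auto simp: dual_cone_def)
  show "(\<Inter>g\<in>G. {y. 0 \<le> g \<bullet> y}) \<subseteq> dual_cone (cone_gen G)"
    by (auto simp: dual_cone_def cone_gen_def inner_sum_left intro!: sum_nonneg)
qed

lemma convex_dual_cone_cone_gen: "finite G \<Longrightarrow> convex (dual_cone (cone_gen G))"
  by (simp add: dual_cone_cone_gen convex_INT convex_halfspace_ge)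

lemma closed_dual_cone_cone_gen: "finite G \<Longrightarrow> closed (dual_cone (cone_gen G))"
  by (simp add: dual_cone_cone_gen closed_INT closed_halfspace_ge)

lemma frontier_dual_cone_cone_gen:
  assumes "finite G" and z: "z \<in> frontier (dual_cone (cone_gen G))"
  obtains g where "g \<in> G" "g \<bullet> z = 0"
proof -
  let ?D = "dual_cone (cone_gen G)" and ?U = "\<Inter>g\<in>G. {y. 0 < g \<bullet> y}"
  have "?U \<subseteq> interior ?D"
    using assms(1) by (intro interior_maximal)
      (auto simp: dual_cone_cone_gen open_INT open_halfspace_gt less_imp_le)
  then have "z \<notin> ?U"
    using z by (auto simp: frontier_def)
  moreover have "z \<in> ?D"
    using z closed_dual_cone_cone_gen[OF assms(1)] by (simp add: frontier_def)
  ultimately show thesis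
    using that by (force simp: dual_cone_cone_gen[OF assms(1)])
qed

lemma proper_face_dual_cone_cone_gen:
  assumes "finite G" and face: "\<rho> face_of dual_cone (cone_gen G)"
    and "\<rho> \<noteq> {}" and "\<rho> \<noteq> dual_cone (cone_gen G)"
  obtains g where "g \<in> G" "span \<rho> \<subseteq> {x. g \<bullet> x = 0}"
proof -
  let ?D = "dual_cone (cone_gen G)"
  have "\<rho> \<subseteq> ?D"
    using face by (rule face_of_imp_subset)
  obtain z where z: "z \<in> rel_interior \<rho>"
    using assms(3) face_of_imp_convex[OF face] rel_interior_eq_empty by blast
  then have "z \<in> ?D - interior ?D"
    using face_of_disjoint_interior[OF face assms(4)] \<open>\<rho> \<subseteq> ?D\<close> rel_interior_subset by blast
  then have "z \<in> frontier ?D"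
    by (simp add: frontier_def closure_subset[THEN subsetD])
  then obtain g where g: "g \<in> G" "g \<bullet> z = 0"
    using frontier_dual_cone_cone_gen[OF assms(1)] by blast
  have "(?D \<inter> {x. g \<bullet> x = 0}) face_of ?D"
    using convex_dual_cone_cone_gen[OF assms(1)]
    by (rule face_of_Int_supporting_hyperplane_ge)
      (use g(1) in \<open>auto simp: dual_cone_cone_gen[OF assms(1)]\<close>)
  then have "\<rho> \<subseteq> ?D \<inter> {x. g \<bullet> x = 0}"
    by (rule subset_of_face_of) (use \<open>\<rho> \<subseteq> ?D\<close> z g rel_interior_subset in auto)
  then have "span \<rho> \<subseteq> {x. g \<bullet> x = 0}"
    by (intro span_minimal subspace_hyperplane) auto
  with g(1) show thesis ..
qed

lemma inner_lattice_pts_Ints: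
  "g \<in> lattice_pts \<Longrightarrow> y \<in> lattice_pts \<Longrightarrow> g \<bullet> y \<in> \<int>"
  unfolding lattice_pts_def inner_vec_def by (auto intro!: Ints_sum Ints_mult)

lemma lattice_pts_subset_lattice_r: "lattice_pts \<subseteq> lattice_r r n"
  unfolding lattice_r_def by (auto intro!: exI[of _ "0::int"])

lemma scaleR_lattice_pts: "c \<in> \<int> \<Longrightarrow> x \<in> lattice_pts \<Longrightarrow> c *\<^sub>R x \<in> lattice_pts"
  by (simp add: lattice_pts_def Ints_mult)

lemma add_lattice_pts: "x \<in> lattice_pts \<Longrightarrow> y \<in> lattice_pts \<Longrightarrow> x + y \<in> lattice_pts"
  by (simp add: lattice_pts_def Ints_add)

lemma lattice_r_orthogonal_imp_lattice_pts:
  assumes g: "g \<in> lattice_pts" "g \<bullet> n = 1" and n: "n \<in> lattice_pts"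
    and z: "z \<in> lattice_r r n" "g \<bullet> z = 0"
  shows "z \<in> lattice_pts"
proof -
  obtain y k where y: "y \<in> lattice_pts" and z_eq: "z = y + (of_int k / r) *\<^sub>R n"
    using z(1) unfolding lattice_r_def by blast
  have "of_int k / r = - (g \<bullet> y)"
    using g(2) z(2) by (simp add: z_eq inner_add_right)
  then have "of_int k / r \<in> \<int>"
    using inner_lattice_pts_Ints[OF g(1) y] by simp
  then show ?thesis
    unfolding z_eq using y n by (intro add_lattice_pts scaleR_lattice_pts)
qed

theorem proposition1p12:
  fixes \<sigma> :: "(real^'n) set" and n m :: "real^'n" and r :: real
  assumes "gorenstein_wrt \<sigma> n"
    and "gorenstein_wrt (dual_cone \<sigma>) m"
    and "r = m \<bullet> n"
  shows "(\<forall>\<rho>. \<rho> facet_of (dual_cone \<sigma>) \<longrightarrow>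
            span \<rho> \<inter> lattice_pts = span \<rho> \<inter> lattice_r r n)
       \<and> frontier (dual_cone \<sigma>) \<inter> lattice_pts = frontier (dual_cone \<sigma>) \<inter> lattice_r r n"
proof -
  obtain G where G: "finite G" "G \<subseteq> lattice_pts" "\<forall>g\<in>G. g \<bullet> n = 1" "\<sigma> = cone_gen G"
    and n: "n \<in> lattice_pts"
    using assms(1) unfolding gorenstein_wrt_def by blast
  have orthogonal_in_lattice: "z \<in> lattice_pts"
    if "g \<in> G" "g \<bullet> z = 0" "z \<in> lattice_r r n" for g z
    using that G n lattice_r_orthogonal_imp_lattice_pts by blast
  have "span \<rho> \<inter> lattice_pts = span \<rho> \<inter> lattice_r r n" if "\<rho> facet_of dual_cone \<sigma>" for \<rho>
  proof -
    have "\<rho> face_of dual_cone (cone_gen G)" "\<rho> \<noteq> {}" "\<rho> \<noteq> dual_cone (cone_gen G)"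
      using that by (auto simp: facet_of_def G(4))
    then obtain g where "g \<in> G" "span \<rho> \<subseteq> {x. g \<bullet> x = 0}"
      by (rule proper_face_dual_cone_cone_gen[OF G(1)])
    then show ?thesis
      using orthogonal_in_lattice lattice_pts_subset_lattice_r by blast
  qed
  moreover have "frontier (dual_cone \<sigma>) \<inter> lattice_pts = frontier (dual_cone \<sigma>) \<inter> lattice_r r n"
    using frontier_dual_cone_cone_gen[OF G(1)] G(4) orthogonal_in_lattice lattice_pts_subset_lattice_r
    by blast
  ultimately show ?thesis
    by blast
qed

end
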